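(* Let $\mathbb{F}\in\{\mathbb{R},\mathbb{C}\}$ and let $p,q,r,s\in\mathbb{F}$ with $r\neq s^2$, $q\neq s^3$, or $p\neq s^4$. Let $\delta$ be the space quartic in $\mathbb{F}\mathbb{P}^3$ parametrised by $t\mapsto[t^4-p,\,t^3+q,\,t^2-r,\,t+s]$, $t\in\mathbb{F}$. A plane intersects $\delta$ in four points parametrised by $t_1,t_2,t_3,t_4$, counting multiplicity, if and only if $$F(t_1,t_2,t_3,t_4):=t_1t_2t_3t_4+s\sum_{i<j<k}t_it_jt_k+r\sum_{i<j}t_it_j+q\sum_i t_i+p=0.$$ In particular, if $t_1,t_2,t_3$ are distinct, then $F(t_1,t_1,t_2,t_3)=0$ if and only if the plane through the points with parameters $t_1,t_2,t_3$ intersects $\delta$ only in those three points and contains the tangent line of $\delta$ at $t_1$.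
   Context: A space quartic is an irreducible non-planar curve of degree $4$ in projective $3$-space. *)

theory Defs
  imports "HOL-Computational_Algebra.Polynomial"
begin

text \<open>Homogeneous coordinates in FP^3 are quadruples; a plane is given by a
  nonzero coefficient quadruple a, and a point x lies on it iff
  pairing a x = 0.\<close>

type_synonym 'a quad = "'a \<times> 'a \<times> 'a \<times> 'a"

fun pairing :: "'a::comm_ring_1 quad \<Rightarrow> 'a quad \<Rightarrow> 'a" where
  "pairing (a0, a1, a2, a3) (x0, x1, x2, x3) = a0 * x0 + a1 * x1 + a2 * x2 + a3 * x3"

definition delta :: "'a::comm_ring_1 \<Rightarrow> 'a \<Rightarrow> 'a \<Rightarrow> 'a \<Rightarrow> 'a \<Rightarrow> 'a quad" where
  "delta p q r s t = (t ^ 4 - p, t ^ 3 + q, t ^ 2 - r, t + s)"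

definition delta_tangent :: "'a::comm_ring_1 \<Rightarrow> 'a quad" where
  "delta_tangent t = (4 * t ^ 3, 3 * t ^ 2, 2 * t, 1)"

definition delta_infinity :: "'a::comm_ring_1 quad" where
  "delta_infinity = (1, 0, 0, 0)"

text \<open>The intersection polynomial of the plane a with the curve:
  its value at t is pairing a (delta p q r s t).\<close>
fun plane_poly :: "'a::comm_ring_1 \<Rightarrow> 'a \<Rightarrow> 'a \<Rightarrow> 'a \<Rightarrow> 'a quad \<Rightarrow> 'a poly" where
  "plane_poly p q r s (a0, a1, a2, a3) =
     smult a0 [:-p, 0, 0, 0, 1:] + smult a1 [:q, 0, 0, 1:] + smult a2 [:-r, 0, 1:] + smult a3 [:s, 1:]"

text \<open>The plane a meets the quartic in exactly the four points with parameters
  t1,t2,t3,t4, counted with multiplicity: the intersection polynomial has degree 4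
  (so the point at infinity is not on the plane) and its root multiplicities are
  given by the multiset {t1,t2,t3,t4}.\<close>
definition meets_in_four :: "'a::idom \<Rightarrow> 'a \<Rightarrow> 'a \<Rightarrow> 'a \<Rightarrow> 'a quad \<Rightarrow> 'a \<Rightarrow> 'a \<Rightarrow> 'a \<Rightarrow> 'a \<Rightarrow> bool" where
  "meets_in_four p q r s a t1 t2 t3 t4 \<longleftrightarrow>
     a \<noteq> (0, 0, 0, 0) \<and> degree (plane_poly p q r s a) = 4 \<and>
     (\<forall>x. order x (plane_poly p q r s a) = count {#t1, t2, t3, t4#} x)"

definition Fq :: "'a::comm_ring_1 \<Rightarrow> 'a \<Rightarrow> 'a \<Rightarrow> 'a \<Rightarrow> 'a \<Rightarrow> 'a \<Rightarrow> 'a \<Rightarrow> 'a \<Rightarrow> 'a" where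
  "Fq p q r s t1 t2 t3 t4 =
     t1 * t2 * t3 * t4
     + s * (t1 * t2 * t3 + t1 * t2 * t4 + t1 * t3 * t4 + t2 * t3 * t4)
     + r * (t1 * t2 + t1 * t3 + t1 * t4 + t2 * t3 + t2 * t4 + t3 * t4)
     + q * (t1 + t2 + t3 + t4)
     + p"

end

theory Submission
  imports Defs
begin

text \<open>A point \<open>delta t\<close> lies on the plane \<open>a\<close> iff \<open>t\<close> is a root of the intersection
  polynomial \<open>P\<^sub>a = plane_poly p q r s a\<close>, whose derivative encodes the tangent line and whose
  leading coefficient \<open>a\<^sub>0\<close> vanishes iff the plane passes through the point \<open>[1,0,0,0]\<close> at
  infinity. Hence the plane meets the quartic exactly in \<open>t\<^sub>1,\<dots>,t\<^sub>4\<close> iff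
  \<open>P\<^sub>a = a\<^sub>0 (X - t\<^sub>1)\<cdots>(X - t\<^sub>4)\<close>. Comparing the coefficients of \<open>X,\<dots>,X\<^sup>4\<close> forces
  \<open>a = a\<^sub>0 (1, -e\<^sub>1, e\<^sub>2, -e\<^sub>3)\<close> in the elementary symmetric functions of the \<open>t\<^sub>i\<close>, and the
  constant coefficients then agree iff \<open>F(t\<^sub>1,t\<^sub>2,t\<^sub>3,t\<^sub>4) = 0\<close>. For the second claim, containing
  the tangent line at \<open>t\<^sub>1\<close> means that \<open>t\<^sub>1\<close> is a double root, so the same argument applies
  to the multiset \<open>{t\<^sub>1,t\<^sub>1,t\<^sub>2,t\<^sub>3}\<close>.\<close>

lemma linear_factors_nonzero:
  "(\<Prod>x\<in>#M. [:-x, 1::'a::idom:]) \<noteq> 0"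
  by (auto simp: prod_mset_zero_iff)

lemma proots_linear_factors:
  "proots (\<Prod>x\<in>#M. [:-x, 1::'a::idom:]) = M"
  by (induction M) (simp_all del: mult_pCons_left add: proots_mult[OF _ linear_factors_nonzero])

lemma order_linear_factors:
  "order y (\<Prod>x\<in>#M. [:-x, 1::'a::idom:]) = count M y"
  by (metis count_proots linear_factors_nonzero proots_linear_factors)

lemma poly_linear_factors_eq_0_iff:
  "poly (\<Prod>x\<in>#M. [:-x, 1::'a::idom:]) y = 0 \<longleftrightarrow> y \<in># M"
  by (auto simp: poly_prod_mset prod_mset_zero_iff)

lemma degree_linear_factors:
  "degree (\<Prod>x\<in>#M. [:-x, 1::'a::idom:]) = size M"
  by (induction M) (simp_all del: mult_pCons_left add: degree_mult_eq[OF _ linear_factors_nonzero])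

lemma lead_coeff_linear_factors:
  "lead_coeff (\<Prod>x\<in>#M. [:-x, 1::'a::idom:]) = 1"
  by (induction M) (simp_all del: mult_pCons_left add: lead_coeff_mult)

lemma linear_factors_dvd:
  fixes p :: "'a::idom poly"
  assumes "M \<subseteq># proots p"
  shows "(\<Prod>x\<in>#M. [:-x, 1:]) dvd p"
  using assms
proof (induction M arbitrary: p)
  case empty
  show ?case by simp
next
  case (add x M)
  show ?case
  proof (cases "p = 0")
    case False
    then have "poly p x = 0"
      using add.prems by (auto dest: mset_subset_eq_insertD)
    then obtain q where p: "p = [:-x, 1:] * q"
      by (metis dvdE poly_eq_0_iff_dvd)
    with False have "q \<noteq> 0" by auto
    then have "proots p = add_mset x (proots q)"
      by (simp del: mult_pCons_left add: p proots_mult)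
    then have "(\<Prod>x\<in>#M. [:-x, 1:]) dvd q"
      using add.prems by (intro add.IH) simp
    then show ?thesis by (simp del: mult_pCons_left add: p)
  qed simp
qed

lemma eq_smult_linear_factors:
  fixes p :: "'a::idom poly"
  assumes "M \<subseteq># proots p" and "size M = degree p"
  shows "p = smult (lead_coeff p) (\<Prod>x\<in>#M. [:-x, 1:])"
proof -
  let ?L = "\<Prod>x\<in>#M. [:-x, 1:]"
  obtain k where p: "p = ?L * k"
    using linear_factors_dvd[OF assms(1)] by (elim dvdE)
  show ?thesis
  proof (cases "k = 0")
    case False
    then have "degree k = 0"
      using assms(2)
      by (simp add: p degree_mult_eq[OF linear_factors_nonzero False] degree_linear_factors)
    then obtain c where "k = [:c:]" by (rule degree_eq_zeroE)
    then show ?thesis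
      by (simp add: p lead_coeff_mult lead_coeff_linear_factors)
  qed (simp add: p)
qed

lemma order_ge_2_iff:
  fixes p :: "'a::{idom, semiring_char_0} poly"
  assumes "pderiv p \<noteq> 0"
  shows "2 \<le> order x p \<longleftrightarrow> poly p x = 0 \<and> poly (pderiv p) x = 0"
proof -
  have "p \<noteq> 0" using assms by auto
  then show ?thesis
    using order_pderiv[of p x] order_root[of p x] order_root[of "pderiv p" x] assms
    by (cases "poly p x = 0") (auto simp: order_0I)
qed

lemma plane_poly_coeffs:
  "plane_poly p q r s (a0, a1, a2, a3) = [:-a0 * p + a1 * q - a2 * r + a3 * s, a3, a2, a1, a0:]"
  by simp

lemma poly_plane_poly:
  "poly (plane_poly p q r s a) t = pairing a (delta p q r s t)"
  by (cases a) (simp add: delta_def algebra_simps eval_nat_numeral)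

lemma poly_pderiv_plane_poly:
  "poly (pderiv (plane_poly p q r s a)) t = pairing a (delta_tangent t)"
  by (cases a) (simp add: delta_tangent_def pderiv_pCons algebra_simps eval_nat_numeral)

lemma degree_plane_poly:
  assumes "pairing a delta_infinity \<noteq> 0"
  shows "degree (plane_poly p q r s a) = 4"
  using assms by (cases a) (simp add: delta_infinity_def)

definition quartic_plane :: "'a::comm_ring_1 \<Rightarrow> 'a \<Rightarrow> 'a \<Rightarrow> 'a \<Rightarrow> 'a quad" where
  "quartic_plane t1 t2 t3 t4 =
     (1, -(t1 + t2 + t3 + t4), t1 * t2 + t1 * t3 + t1 * t4 + t2 * t3 + t2 * t4 + t3 * t4,
      -(t1 * t2 * t3 + t1 * t2 * t4 + t1 * t3 * t4 + t2 * t3 * t4))"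

lemma linear_factors_4:
  "(\<Prod>t\<in>#{#t1, t2, t3, t4#}. [:-t, 1:]) =
     [:t1 * t2 * t3 * t4, -(t1 * t2 * t3 + t1 * t2 * t4 + t1 * t3 * t4 + t2 * t3 * t4),
       t1 * t2 + t1 * t3 + t1 * t4 + t2 * t3 + t2 * t4 + t3 * t4, -(t1 + t2 + t3 + t4), 1::'a::comm_ring_1:]"
  by (simp add: algebra_simps)

lemma plane_poly_quartic_plane:
  "plane_poly p q r s (quartic_plane t1 t2 t3 t4) =
     (\<Prod>t\<in>#{#t1, t2, t3, t4#}. [:-t, 1:]) - [:Fq p q r s t1 t2 t3 t4:]"
  unfolding quartic_plane_def plane_poly_coeffs linear_factors_4 Fq_def
  by (simp add: algebra_simps)

lemma Fq_eq_0_if_plane_poly_eq_smult: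
  fixes p q r s :: "'a::idom"
  assumes "plane_poly p q r s a = smult c (\<Prod>t\<in>#{#t1, t2, t3, t4#}. [:-t, 1:])" and "c \<noteq> 0"
  shows "Fq p q r s t1 t2 t3 t4 = 0"
proof -
  obtain a0 a1 a2 a3 where a: "a = (a0, a1, a2, a3)" by (cases a)
  have "-a0 * p + a1 * q - a2 * r + a3 * s = c * (t1 * t2 * t3 * t4)
    \<and> a3 = c * -(t1 * t2 * t3 + t1 * t2 * t4 + t1 * t3 * t4 + t2 * t3 * t4)
    \<and> a2 = c * (t1 * t2 + t1 * t3 + t1 * t4 + t2 * t3 + t2 * t4 + t3 * t4)
    \<and> a1 = c * -(t1 + t2 + t3 + t4) \<and> a0 = c"
    using assms(1)
    unfolding a plane_poly_coeffs linear_factors_4 smult_pCons pCons_eq_iff mult_1_right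
    by blast
  then have "c * Fq p q r s t1 t2 t3 t4 = 0"
    unfolding Fq_def by algebra
  with assms(2) show ?thesis by simp
qed

lemma meets_in_four_iff_Fq_eq_0:
  fixes p q r s :: "'a::idom"
  shows "(\<exists>a. meets_in_four p q r s a t1 t2 t3 t4) \<longleftrightarrow> Fq p q r s t1 t2 t3 t4 = 0"
proof
  assume "\<exists>a. meets_in_four p q r s a t1 t2 t3 t4"
  then obtain a where deg: "degree (plane_poly p q r s a) = 4"
    and ord: "\<And>x. order x (plane_poly p q r s a) = count {#t1, t2, t3, t4#} x"
    unfolding meets_in_four_def by blast
  define P where "P = plane_poly p q r s a"
  have "P \<noteq> 0" using deg by (auto simp: P_def)
  then have "proots P = {#t1, t2, t3, t4#}"
    by (intro multiset_eqI) (simp add: P_def ord)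
  then have "P = smult (lead_coeff P) (\<Prod>t\<in>#{#t1, t2, t3, t4#}. [:-t, 1:])"
    using deg by (intro eq_smult_linear_factors) (simp_all add: P_def)
  moreover have "lead_coeff P \<noteq> 0" using \<open>P \<noteq> 0\<close> by simp
  ultimately show "Fq p q r s t1 t2 t3 t4 = 0"
    unfolding P_def by (rule Fq_eq_0_if_plane_poly_eq_smult)
next
  assume "Fq p q r s t1 t2 t3 t4 = 0"
  then have P: "plane_poly p q r s (quartic_plane t1 t2 t3 t4) =
      (\<Prod>t\<in>#{#t1, t2, t3, t4#}. [:-t, 1:])"
    by (simp add: plane_poly_quartic_plane)
  then have "meets_in_four p q r s (quartic_plane t1 t2 t3 t4) t1 t2 t3 t4"
    unfolding meets_in_four_def P degree_linear_factors order_linear_factors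
    by (simp add: quartic_plane_def)
  then show "\<exists>a. meets_in_four p q r s a t1 t2 t3 t4" ..
qed

lemma tangent_plane_iff_Fq_eq_0:
  fixes p q r s :: "'a::{idom, ring_char_0}"
  assumes "distinct [t1, t2, t3]"
  shows "Fq p q r s t1 t1 t2 t3 = 0 \<longleftrightarrow>
    (\<exists>a. a \<noteq> (0, 0, 0, 0)
         \<and> pairing a (delta p q r s t1) = 0
         \<and> pairing a (delta p q r s t2) = 0
         \<and> pairing a (delta p q r s t3) = 0
         \<and> pairing a (delta_tangent t1) = 0
         \<and> pairing a delta_infinity \<noteq> 0
         \<and> (\<forall>t. pairing a (delta p q r s t) = 0 \<longrightarrow> t \<in> {t1, t2, t3}))"
  (is "_ \<longleftrightarrow> (\<exists>a. ?tangent_plane a)")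
proof
  let ?M = "{#t1, t1, t2, t3#}"
  let ?a = "quartic_plane t1 t1 t2 t3"
  assume "Fq p q r s t1 t1 t2 t3 = 0"
  then have P: "plane_poly p q r s ?a = (\<Prod>t\<in>#?M. [:-t, 1:])"
    by (simp add: plane_poly_quartic_plane)
  have on_plane: "pairing ?a (delta p q r s t) = 0 \<longleftrightarrow> t \<in># ?M" for t
    by (simp only: poly_plane_poly[symmetric] P poly_linear_factors_eq_0_iff)
  have "pderiv (plane_poly p q r s ?a) \<noteq> 0"
    by (simp only: pderiv_eq_0_iff P degree_linear_factors) simp
  moreover have "2 \<le> order t1 (plane_poly p q r s ?a)"
    by (simp only: P order_linear_factors) simp
  ultimately have "pairing ?a (delta_tangent t1) = 0"
    by (simp add: order_ge_2_iff poly_pderiv_plane_poly)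
  moreover have "pairing ?a delta_infinity \<noteq> 0"
    by (simp add: quartic_plane_def delta_infinity_def)
  ultimately have "?tangent_plane ?a"
    using on_plane by (auto simp: quartic_plane_def)
  then show "\<exists>a. ?tangent_plane a" ..
next
  assume "\<exists>a. ?tangent_plane a"
  then obtain a where on_plane: "pairing a (delta p q r s t1) = 0"
      "pairing a (delta p q r s t2) = 0" "pairing a (delta p q r s t3) = 0"
    and tangent: "pairing a (delta_tangent t1) = 0"
    and infinity: "pairing a delta_infinity \<noteq> 0"
    by blast
  define P where "P = plane_poly p q r s a"
  have deg: "degree P = 4"
    using infinity by (simp add: P_def degree_plane_poly)
  then have "P \<noteq> 0" "pderiv P \<noteq> 0" by (auto simp: pderiv_eq_0_iff)
  have "2 \<le> order t1 P"
    using order_ge_2_iff[OF \<open>pderiv P \<noteq> 0\<close>] on_plane tangent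
    by (simp add: P_def poly_plane_poly poly_pderiv_plane_poly)
  moreover have "0 < order t2 P" "0 < order t3 P"
    using on_plane \<open>P \<noteq> 0\<close> by (simp_all add: order_gt_0_iff P_def poly_plane_poly)
  ultimately have "{#t1, t1, t2, t3#} \<subseteq># proots P"
    using assms \<open>P \<noteq> 0\<close> by (intro mset_subset_eqI) auto
  then have "P = smult (lead_coeff P) (\<Prod>t\<in>#{#t1, t1, t2, t3#}. [:-t, 1:])"
    using deg by (intro eq_smult_linear_factors) simp_all
  moreover have "lead_coeff P \<noteq> 0" using \<open>P \<noteq> 0\<close> by simp
  ultimately show "Fq p q r s t1 t1 t2 t3 = 0"
    unfolding P_def by (rule Fq_eq_0_if_plane_poly_eq_smult)
qed

text \<open>The hypothesis on \<open>p, q, r, s\<close> only makes \<open>delta\<close> non-planar, a genuine space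
  quartic; the two equivalences are pure algebra and hold without it.\<close>

theorem lemma3p2:
  fixes p q r s :: "'a::real_normed_field"
  assumes "r \<noteq> s ^ 2 \<or> q \<noteq> s ^ 3 \<or> p \<noteq> s ^ 4"
  shows "(\<forall>t1 t2 t3 t4. (\<exists>a. meets_in_four p q r s a t1 t2 t3 t4) \<longleftrightarrow> Fq p q r s t1 t2 t3 t4 = 0)
       \<and> (\<forall>t1 t2 t3. distinct [t1, t2, t3] \<longrightarrow>
            (Fq p q r s t1 t1 t2 t3 = 0 \<longleftrightarrow>
             (\<exists>a. a \<noteq> (0, 0, 0, 0)
                  \<and> pairing a (delta p q r s t1) = 0
                  \<and> pairing a (delta p q r s t2) = 0
                  \<and> pairing a (delta p q r s t3) = 0
                  \<and> pairing a (delta_tangent t1) = 0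
                  \<and> pairing a delta_infinity \<noteq> 0
                  \<and> (\<forall>t. pairing a (delta p q r s t) = 0 \<longrightarrow> t \<in> {t1, t2, t3}))))"
  by (intro conjI allI impI meets_in_four_iff_Fq_eq_0 tangent_plane_iff_Fq_eq_0)

end
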